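(* For every $n\ge0$, $Mlt_l(Q_n)\cong Mlt_r(Q_n)$.
   Context: Cayley--Dickson loops: $Q_0=\{1,-1\}\subset\mathbb{R}$ with conjugation $x^*=x$. For $n\ge1$, $Q_n=\{(x,0),(x,1)\mid x\in Q_{n-1}\}$ with multiplication $(x,0)(y,0)=(xy,0)$, $(x,0)(y,1)=(yx,1)$, $(x,1)(y,0)=(xy^*,1)$, $(x,1)(y,1)=(-y^*x,0)$ and conjugation $(x,0)^*=(x^*,0)$, $(x,1)^*=(-x,1)$, where $-(x,a)=(-x,a)$. $Q_n$ is a loop with neutral element $1=(1,0,\dots,0)$. For a loop $Q$, $L_x(a)=xa$, $R_x(a)=ax$, $Mlt_l(Q)=\langle L_x\mid x\in Q\rangle$, $Mlt_r(Q)=\langle R_x\mid x\in Q\rangle$. *)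

theory Defs
  imports "HOL-Algebra.Algebra"
begin

(* The element (x, a) of Q_n with x = (r, bs) in Q_(n-1) is (r, a # bs);
   False encodes 0 and True encodes 1. *)
type_synonym cd = "int \<times> bool list"

definition Q :: "nat \<Rightarrow> cd set" where
  "Q n = {(r, bs). (r = 1 \<or> r = -1) \<and> length bs = n}"

definition cd_neg :: "cd \<Rightarrow> cd" where
  "cd_neg x = (- fst x, snd x)"

definition cd_pair :: "cd \<Rightarrow> bool \<Rightarrow> cd" where
  "cd_pair x a = (fst x, a # snd x)"

fun cd_conj :: "cd \<Rightarrow> cd" where
  "cd_conj (r, []) = (r, [])"
| "cd_conj (r, False # bs) = cd_pair (cd_conj (r, bs)) False"
| "cd_conj (r, True # bs) = (- r, True # bs)"

lemma length_cd_conj [simp]: "length (snd (cd_conj x)) = length (snd x)"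
  by (induction x rule: cd_conj.induct) (auto simp: cd_pair_def)

function cd_mult :: "cd \<Rightarrow> cd \<Rightarrow> cd" where
  "cd_mult (r, []) (s, []) = (r * s, [])"
| "cd_mult (r, a # as) (s, b # bs) =
     (let x = (r, as); y = (s, bs) in
      if \<not> a \<and> \<not> b then cd_pair (cd_mult x y) False
      else if \<not> a \<and> b then cd_pair (cd_mult y x) True
      else if a \<and> \<not> b then cd_pair (cd_mult x (cd_conj y)) True
      else cd_pair (cd_neg (cd_mult (cd_conj y) x)) False)"
| "cd_mult (r, []) (s, b # bs) = (r, [])"
| "cd_mult (r, a # as) (s, []) = (r, a # as)"
  by pat_completeness auto
termination
  by (relation "measure (\<lambda>(x, y). length (snd x) + length (snd y))") auto

definition L :: "nat \<Rightarrow> cd \<Rightarrow> (cd \<Rightarrow> cd)" where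
  "L n x = (\<lambda>a\<in>Q n. cd_mult x a)"

definition R :: "nat \<Rightarrow> cd \<Rightarrow> (cd \<Rightarrow> cd)" where
  "R n x = (\<lambda>a\<in>Q n. cd_mult a x)"

definition Mlt_l :: "nat \<Rightarrow> (cd \<Rightarrow> cd) monoid" where
  "Mlt_l n = subgroup_generated (BijGroup (Q n)) (L n ` Q n)"

definition Mlt_r :: "nat \<Rightarrow> (cd \<Rightarrow> cd) monoid" where
  "Mlt_r n = subgroup_generated (BijGroup (Q n)) (R n ` Q n)"

end

theory Submission
  imports Defs
begin

(* Mlt_l(Q_n) and Mlt_r(Q_n) are conjugate inside the symmetric group Sym(Q_n).

   The Cayley-Dickson conjugation conj x = x* is an involution of Q_n and an
   anti-automorphism: (xy)* = y* x*.  Consequently conjugating a permutation f of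
   Q_n by it, f \<mapsto> conj \<circ> f \<circ> conj, is an involutive automorphism of Sym(Q_n) that
   sends the left translation L_x to the right translation R_{x*} and R_y to L_{y*}.  An
   involutive automorphism that exchanges two generating sets restricts to an
   isomorphism between the subgroups they generate. *)

lemma cd_conj_involutive [simp]: "cd_conj (cd_conj x) = x"
  by (induction x rule: cd_conj.induct) (auto simp: cd_pair_def)

lemma cd_neg_involutive [simp]: "cd_neg (cd_neg x) = x"
  by (simp add: cd_neg_def)

lemma cd_conj_neg: "cd_conj (cd_neg x) = cd_neg (cd_conj x)"
  by (induction x rule: cd_conj.induct) (auto simp: cd_neg_def cd_pair_def)

lemma fst_cd_conj: "fst (cd_conj x) = fst x \<or> fst (cd_conj x) = - fst x"
  by (induction x rule: cd_conj.induct) (auto simp: cd_pair_def)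

text \<open>The recursive clauses of negation, conjugation and multiplication, stated in terms
  of the pairing (x, a) of the Cayley-Dickson doubling rather than the list
  encoding; with these, properties of cd_mult follow by induction on n.\<close>

lemma length_cd_pair [simp]: "length (snd (cd_pair x a)) = Suc (length (snd x))"
  by (simp add: cd_pair_def)

lemma length_cd_neg [simp]: "length (snd (cd_neg x)) = length (snd x)"
  by (simp add: cd_neg_def)

lemma cd_neg_pair [simp]: "cd_neg (cd_pair x a) = cd_pair (cd_neg x) a"
  by (simp add: cd_neg_def cd_pair_def)

lemma cd_conj_pair [simp]:
  "cd_conj (cd_pair x False) = cd_pair (cd_conj x) False"
  "cd_conj (cd_pair x True) = cd_pair (cd_neg x) True"
  by (cases x; simp add: cd_pair_def cd_neg_def)+

lemma cd_mult_pair [simp]: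
  assumes "length (snd x) = length (snd y)"
  shows "cd_mult (cd_pair x a) (cd_pair y b) =
    (if \<not> a \<and> \<not> b then cd_pair (cd_mult x y) False
     else if \<not> a \<and> b then cd_pair (cd_mult y x) True
     else if a \<and> \<not> b then cd_pair (cd_mult x (cd_conj y)) True
     else cd_pair (cd_neg (cd_mult (cd_conj y) x)) False)"
  by (cases x; cases y) (simp add: cd_pair_def Let_def)

lemma cd_pair_cases:
  assumes "length (snd x) = Suc n"
  obtains x' a where "x = cd_pair x' a" "length (snd x') = n"
  using assms by (cases x; cases "snd x") (auto simp: cd_pair_def)

lemma length_cd_mult:
  "length (snd x) = n \<Longrightarrow> length (snd y) = n \<Longrightarrow> length (snd (cd_mult x y)) = n"
proof (induction n arbitrary: x y)
  case 0
  then show ?case by (cases x; cases y) auto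
next
  case (Suc n)
  then obtain x' a y' b where "x = cd_pair x' a" "y = cd_pair y' b"
      "length (snd x') = n" "length (snd y') = n"
    by (elim cd_pair_cases)
  then show ?case using Suc.IH by simp
qed

text \<open>Negation commutes with multiplication in each argument (needed to move the sign
  produced by the clause for two second components out of products).\<close>

lemma cd_mult_neg:
  assumes "length (snd x) = n" "length (snd y) = n"
  shows "cd_mult (cd_neg x) y = cd_neg (cd_mult x y) \<and> cd_mult x (cd_neg y) = cd_neg (cd_mult x y)"
  using assms
proof (induction n arbitrary: x y)
  case 0
  then show ?case by (cases x; cases y) (auto simp: cd_neg_def)
next
  case (Suc n)
  then obtain x' a y' b where "x = cd_pair x' a" "y = cd_pair y' b"
      "length (snd x') = n" "length (snd y') = n"
    by (elim cd_pair_cases)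
  then show ?case using Suc.IH by (auto simp: cd_conj_neg)
qed

lemma cd_conj_mult:
  assumes "length (snd x) = n" "length (snd y) = n"
  shows "cd_conj (cd_mult x y) = cd_mult (cd_conj y) (cd_conj x)"
  using assms
proof (induction n arbitrary: x y)
  case 0
  then show ?case by (cases x; cases y) auto
next
  case (Suc n)
  then obtain x' a y' b where "x = cd_pair x' a" "y = cd_pair y' b"
      "length (snd x') = n" "length (snd y') = n"
    by (elim cd_pair_cases)
  then show ?case using Suc.IH cd_mult_neg by (auto simp: cd_conj_neg length_cd_mult)
qed

lemma mem_Q: "x \<in> Q n \<longleftrightarrow> (fst x = 1 \<or> fst x = -1) \<and> length (snd x) = n"
  by (cases x) (simp add: Q_def)

lemma cd_conj_Q: "x \<in> Q n \<Longrightarrow> cd_conj x \<in> Q n"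
  using fst_cd_conj[of x] by (auto simp: mem_Q)

text \<open>Conjugation of a permutation f of S by a map c,
  made extensional so that it lands in Bij S.\<close>

definition conjugate_by :: "'a set \<Rightarrow> ('a \<Rightarrow> 'a) \<Rightarrow> ('a \<Rightarrow> 'a) \<Rightarrow> ('a \<Rightarrow> 'a)" where
  "conjugate_by S c f = (\<lambda>a\<in>S. c (f (c a)))"

locale set_involution =
  fixes S :: "'a set" and c :: "'a \<Rightarrow> 'a"
  assumes closed: "a \<in> S \<Longrightarrow> c a \<in> S"
    and involutive: "a \<in> S \<Longrightarrow> c (c a) = a"
begin

lemma bij_betw: "bij_betw c S S"
  by (rule bij_betw_byWitness[where f' = c]) (auto simp: closed involutive)

lemma conjugate_by_Bij: "f \<in> Bij S \<Longrightarrow> conjugate_by S c f \<in> Bij S"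
proof -
  assume "f \<in> Bij S"
  then have "bij_betw (c \<circ> (f \<circ> c)) S S"
    using bij_betw_trans[OF bij_betw_trans[OF bij_betw] bij_betw] by (simp add: Bij_def)
  then have "bij_betw (conjugate_by S c f) S S"
    by (rule bij_betw_cong[THEN iffD1, rotated]) (simp add: conjugate_by_def)
  then show ?thesis by (simp add: Bij_def conjugate_by_def)
qed

lemma conjugate_by_conjugate_by:
  assumes "f \<in> Bij S"
  shows "conjugate_by S c (conjugate_by S c f) = f"
proof (rule ext)
  fix a
  show "conjugate_by S c (conjugate_by S c f) a = f a"
    using Bij_imp_funcset[OF assms] Bij_imp_extensional[OF assms]
    by (auto simp: conjugate_by_def closed involutive extensional_def Pi_iff)
qed

lemma conjugate_by_compose:
  assumes "g \<in> Bij S"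
  shows "conjugate_by S c (compose S f g) = compose S (conjugate_by S c f) (conjugate_by S c g)"
proof (rule ext)
  fix a
  show "conjugate_by S c (compose S f g) a = compose S (conjugate_by S c f) (conjugate_by S c g) a"
  proof (cases "a \<in> S")
    case True
    then have "g (c a) \<in> S"
      using assms Bij_imp_funcset closed by blast
    with True show ?thesis
      by (simp add: conjugate_by_def compose_def closed involutive)
  qed (simp add: conjugate_by_def compose_def)
qed

lemma conjugate_by_iso: "conjugate_by S c \<in> iso (BijGroup S) (BijGroup S)"
proof -
  have "conjugate_by S c \<in> hom (BijGroup S) (BijGroup S)"
    by (rule homI) (auto simp: BijGroup_def conjugate_by_Bij conjugate_by_compose compose_Bij)
  moreover have "bij_betw (conjugate_by S c) (Bij S) (Bij S)"
    by (rule bij_betw_byWitness[where f' = "conjugate_by S c"])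
       (auto simp: conjugate_by_Bij conjugate_by_conjugate_by)
  ultimately show ?thesis
    by (simp add: iso_def BijGroup_def)
qed

end

lemma (in group) involutive_automorphism_swaps_generated:
  assumes iso: "h \<in> iso G G"
    and involutive: "\<And>g. g \<in> carrier G \<Longrightarrow> h (h g) = g"
    and A_to_B: "\<And>g. g \<in> carrier G \<Longrightarrow> g \<in> A \<Longrightarrow> h g \<in> B"
    and B_to_A: "\<And>g. g \<in> carrier G \<Longrightarrow> g \<in> B \<Longrightarrow> h g \<in> A"
  shows "subgroup_generated G A \<cong> subgroup_generated G B"
proof -
  interpret group_hom G G h
    using iso by (simp add: group_hom_def group_hom_axioms_def is_group iso_def)
  have closed: "\<And>g. g \<in> carrier G \<Longrightarrow> h g \<in> carrier G"
    using iso by (simp add: iso_def hom_def Pi_def)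
  have "h ` (carrier G \<inter> A) = carrier G \<inter> B"
  proof
    show "h ` (carrier G \<inter> A) \<subseteq> carrier G \<inter> B"
      using closed A_to_B by auto
    show "carrier G \<inter> B \<subseteq> h ` (carrier G \<inter> A)"
    proof
      fix g assume g: "g \<in> carrier G \<inter> B"
      then have "h g \<in> carrier G \<inter> A" and "g = h (h g)"
        using closed B_to_A involutive by auto
      then show "g \<in> h ` (carrier G \<inter> A)" by blast
    qed
  qed
  then have "h \<in> iso (subgroup_generated G (carrier G \<inter> A)) (subgroup_generated G (carrier G \<inter> B))"
    by (intro iso_between_subgroups[OF iso]) auto
  then show ?thesis
    unfolding is_iso_def subgroup_generated_restrict by blast
qed

interpretation cd_conj_involution: set_involution "Q n" cd_conj
  by unfold_locales (simp_all add: cd_conj_Q)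

text \<open>Conjugating translations by the Cayley-Dickson conjugation exchanges left and
  right: (x a*)* = a x* and (a* y)* = y* a.\<close>

lemma cd_conj_mult_Q: "x \<in> Q n \<Longrightarrow> y \<in> Q n \<Longrightarrow> cd_conj (cd_mult x y) = cd_mult (cd_conj y) (cd_conj x)"
  by (rule cd_conj_mult) (simp_all add: mem_Q)

lemma conjugate_by_L: "x \<in> Q n \<Longrightarrow> conjugate_by (Q n) cd_conj (L n x) = R n (cd_conj x)"
  by (rule ext) (simp add: conjugate_by_def L_def R_def cd_conj_Q cd_conj_mult_Q)

lemma conjugate_by_R: "y \<in> Q n \<Longrightarrow> conjugate_by (Q n) cd_conj (R n y) = L n (cd_conj y)"
  by (rule ext) (simp add: conjugate_by_def L_def R_def cd_conj_Q cd_conj_mult_Q[of "cd_conj _" n y])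

theorem mainTheorem11:
  shows "\<forall>n::nat. Mlt_l n \<cong> Mlt_r n"
proof
  fix n
  let ?\<phi> = "conjugate_by (Q n) cd_conj"
  interpret group "BijGroup (Q n)"
    by (rule group_BijGroup)
  have "subgroup_generated (BijGroup (Q n)) (L n ` Q n)
        \<cong> subgroup_generated (BijGroup (Q n)) (R n ` Q n)"
  proof (rule involutive_automorphism_swaps_generated)
    show "?\<phi> \<in> iso (BijGroup (Q n)) (BijGroup (Q n))"
      by (rule cd_conj_involution.conjugate_by_iso)
    show "?\<phi> (?\<phi> f) = f" if "f \<in> carrier (BijGroup (Q n))" for f
      using that cd_conj_involution.conjugate_by_conjugate_by by (simp add: BijGroup_def)
    show "?\<phi> f \<in> R n ` Q n" if "f \<in> L n ` Q n" for f
      using that conjugate_by_L cd_conj_Q by blast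
    show "?\<phi> f \<in> L n ` Q n" if "f \<in> R n ` Q n" for f
      using that conjugate_by_R cd_conj_Q by blast
  qed
  then show "Mlt_l n \<cong> Mlt_r n"
    by (simp add: Mlt_l_def Mlt_r_def)
qed

end
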